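(* Let $B_1,\dots,B_n$ be components with pairwise disjoint action sets and $\gamma$ a set of interactions over them. Then $\mathcal{E}(\gamma)$ is an inductive predicate of the system $\|_\gamma B_i^h$: whenever a state $s$ of $\|_\gamma B_i^h$ satisfies $\mathcal{E}(\gamma)$, every successor of $s$ by a time transition or by a discrete transition (executing some interaction of $\gamma$) satisfies $\mathcal{E}(\gamma)$.
   Context: Components and their semantics: a component is a timed automaton $B=(L,A,\mathcal{X},T,\mathsf{tpc},s_0)$ with locations $L$, actions $A$, clocks $\mathcal{X}$, edges $(l,(a,g,r),l')\in T$ (action $a$, clock-constraint guard $g$, reset set $r$), time progress conditions $\mathsf{tpc}(l)$ and initial configuration $s_0=(l_0,c_0)$; states $(l,\mathbf{v})$ with $\mathbf{v}$ a valuation of clocks in $\mathbb{R}_{\ge0}$; time transitions $(l,\mathbf{v})\xrightarrow{\delta}(l,\mathbf{v}+\delta)$ allowed if $\mathsf{tpc}(l)$ holds along $[0,\delta]$; discrete transitions $(l,\mathbf{v})\xrightarrow{a}(l',\mathbf{v}[r])$ if $(l,(a,g,r),l')\in T$, $\mathbf{v}\models g$, $\mathbf{v}[r]\models\mathsf{tpc}(l')$ ($\mathbf{v}[r]$ resets clocks in $r$ to $0$). A state predicate is inductive if whenever it holds in a state it holds in all its time and discrete successors. Interactions and systems: for components $B_i=(L_i,A_i,\mathcal{X}_i,T_i,\mathsf{tpc}_i,(l_{0i},c_{0i}))$ with pairwise disjoint action sets, an interaction is a nonempty set $\alpha\subseteq\bigcup_iA_i$ containing at most one action of each component; $\mathit{Act}(\gamma)=\bigcup_{\alpha\in\gamma}\alpha$.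 The system $\|_\gamma B_i$ is the component with locations $\times_iL_i$, actions $\gamma$, clocks $\bigcup_i\mathcal{X}_i$, $\mathsf{tpc}(\bar l)=\bigwedge_i\mathsf{tpc}_i(l_i)$, initial configuration $((l_{01},\dots,l_{0n}),\bigwedge_ic_{0i})$, and an edge $(\bar l,(\alpha,\bigwedge_{i\in I}g_i,\bigcup_{i\in I}r_i),\bar l')$ whenever $\alpha=\{a_i\}_{i\in I}\in\gamma$, $(l_i,(a_i,g_i,r_i),l'_i)\in T_i$ for $i\in I$, and $l'_i=l_i$ for $i\notin I$. History clocks: $B^h$ is obtained from $B$ by adding fresh clocks $h_0$ and $h_a$ ($a\in A$), adding $h_a$ to the reset set of every edge labelled $a$, and strengthening the initial constraint to $c_0\wedge h_0=0\wedge\bigwedge_{a\in A}h_a>0$. In $\|_\gamma B_i^h$ the clock $h_0$ (never reset nor tested) is shared by all components; all other clocks are local. Interaction inequalities: for a set of interactions $\gamma$ and a set of actions $\alpha$, $\gamma\ominus\alpha=\{\beta\setminus\alpha\mid\beta\in\gamma,\ \beta\not\subseteq\alpha\}$. Define recursively $\mathcal{E}(\emptyset)=\mathit{true}$ and, for $\gamma\neq\emptyset$, $\mathcal{E}(\gamma)=\bigvee_{\alpha\in\gamma}\Big(\bigwedge_{a_i,a_j\in\alpha}h_{a_i}=h_{a_j}\ \wedge\bigwedge_{a_i\in\alpha,\ a_k\in\mathit{Act}(\gamma\ominus\alpha)}h_{a_i}\le h_{a_k}\ \wedge\ \mathcal{E}(\gamma\ominus\alpha)\Big)$. *)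

theory Defs
  imports Complex_Main "HOL-Library.FuncSet"
begin

datatype cmp = Lt | Le | Eq | Ge | Gt

datatype 'x atom = Atom 'x cmp nat

text \<open>A clock constraint is a (finite) conjunction of atomic constraints,
  represented by the set of its conjuncts; the empty set is true.\<close>
type_synonym 'x cc = "'x atom set"

type_synonym 'x val = "'x \<Rightarrow> real"

fun sat_cmp :: "real \<Rightarrow> cmp \<Rightarrow> real \<Rightarrow> bool" where
  "sat_cmp x Lt k = (x < k)"
| "sat_cmp x Le k = (x \<le> k)"
| "sat_cmp x Eq k = (x = k)"
| "sat_cmp x Ge k = (x \<ge> k)"
| "sat_cmp x Gt k = (x > k)"

fun sat_atom :: "'x val \<Rightarrow> 'x atom \<Rightarrow> bool" where
  "sat_atom v (Atom x c k) = sat_cmp (v x) c (real k)"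

definition sat :: "'x val \<Rightarrow> 'x cc \<Rightarrow> bool" where
  "sat v g \<longleftrightarrow> (\<forall>c\<in>g. sat_atom v c)"

fun atom_clock :: "'x atom \<Rightarrow> 'x" where
  "atom_clock (Atom x c k) = x"

fun map_atom :: "('x \<Rightarrow> 'y) \<Rightarrow> 'x atom \<Rightarrow> 'y atom" where
  "map_atom f (Atom x c k) = Atom (f x) c k"

definition cc_over :: "'x set \<Rightarrow> 'x cc \<Rightarrow> bool" where
  "cc_over X g \<longleftrightarrow> finite g \<and> atom_clock ` g \<subseteq> X"

record ('l, 'a, 'x) comp =
  locs :: "'l set"
  acts :: "'a set"
  clks :: "'x set"
  edges :: "('l \<times> ('a \<times> 'x cc \<times> 'x set) \<times> 'l) set"
  tpc :: "'l \<Rightarrow> 'x cc"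
  init_loc :: 'l
  init_cc :: "'x cc"

definition wf_comp :: "('l, 'a, 'x) comp \<Rightarrow> bool" where
  "wf_comp B \<longleftrightarrow>
     finite (locs B) \<and> finite (acts B) \<and> finite (clks B) \<and> finite (edges B) \<and>
     init_loc B \<in> locs B \<and> cc_over (clks B) (init_cc B) \<and>
     (\<forall>l\<in>locs B. cc_over (clks B) (tpc B l)) \<and>
     (\<forall>(l, (a, g, r), l') \<in> edges B.
        l \<in> locs B \<and> l' \<in> locs B \<and> a \<in> acts B \<and> cc_over (clks B) g \<and> r \<subseteq> clks B)"

definition reset :: "'x val \<Rightarrow> 'x set \<Rightarrow> 'x val" where
  "reset v r = (\<lambda>x. if x \<in> r then 0 else v x)"

definition delay :: "'x val \<Rightarrow> real \<Rightarrow> 'x val" where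
  "delay v d = (\<lambda>x. v x + d)"

definition is_state :: "('l, 'a, 'x) comp \<Rightarrow> 'l \<times> 'x val \<Rightarrow> bool" where
  "is_state B s \<longleftrightarrow> fst s \<in> locs B \<and> (\<forall>x\<in>clks B. 0 \<le> snd s x)"

definition time_step :: "('l, 'a, 'x) comp \<Rightarrow> 'l \<times> 'x val \<Rightarrow> real \<Rightarrow> 'l \<times> 'x val \<Rightarrow> bool" where
  "time_step B s d s' \<longleftrightarrow>
     0 \<le> d \<and> s' = (fst s, delay (snd s) d) \<and>
     (\<forall>t\<in>{0..d}. sat (delay (snd s) t) (tpc B (fst s)))"

definition disc_step :: "('l, 'a, 'x) comp \<Rightarrow> 'l \<times> 'x val \<Rightarrow> 'a \<Rightarrow> 'l \<times> 'x val \<Rightarrow> bool" where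
  "disc_step B s a s' \<longleftrightarrow>
     (\<exists>g r l'. (fst s, (a, g, r), l') \<in> edges B \<and> sat (snd s) g \<and>
        s' = (l', reset (snd s) r) \<and> sat (reset (snd s) r) (tpc B l'))"

definition inductive_pred :: "('l, 'a, 'x) comp \<Rightarrow> ('l \<times> 'x val \<Rightarrow> bool) \<Rightarrow> bool" where
  "inductive_pred B P \<longleftrightarrow>
     (\<forall>s. is_state B s \<longrightarrow> P s \<longrightarrow>
        (\<forall>d s'. time_step B s d s' \<longrightarrow> P s') \<and>
        (\<forall>a s'. disc_step B s a s' \<longrightarrow> P s'))"

datatype ('x, 'a) hclock = Orig 'x | H0 | H 'a

definition hist :: "('l, 'a, 'x) comp \<Rightarrow> ('l, 'a, ('x, 'a) hclock) comp" where
  "hist B = \<lparr> locs = locs B, acts = acts B,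
     clks = Orig ` clks B \<union> {H0} \<union> H ` acts B,
     edges = (\<lambda>(l, (a, g, r), l'). (l, (a, map_atom Orig ` g, Orig ` r \<union> {H a}), l')) ` edges B,
     tpc = (\<lambda>l. map_atom Orig ` tpc B l),
     init_loc = init_loc B,
     init_cc = map_atom Orig ` init_cc B \<union> {Atom H0 Eq 0} \<union> (\<lambda>a. Atom (H a) Gt 0) ` acts B \<rparr>"

text \<open>Components are B 1, ..., B n.\<close>
definition is_interaction :: "nat \<Rightarrow> (nat \<Rightarrow> ('l, 'a, 'x) comp) \<Rightarrow> 'a set \<Rightarrow> bool" where
  "is_interaction n B \<alpha> \<longleftrightarrow>
     \<alpha> \<noteq> {} \<and> \<alpha> \<subseteq> (\<Union>i\<in>{1..n}. acts (B i)) \<and>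
     (\<forall>i\<in>{1..n}. card (\<alpha> \<inter> acts (B i)) \<le> 1)"

definition Act :: "'a set set \<Rightarrow> 'a set" where
  "Act \<gamma> = \<Union>\<gamma>"

definition comp_edges :: "nat \<Rightarrow> (nat \<Rightarrow> ('l, 'a, 'x) comp) \<Rightarrow> 'a set set \<Rightarrow>
    ((nat \<Rightarrow> 'l) \<times> ('a set \<times> 'x cc \<times> 'x set) \<times> (nat \<Rightarrow> 'l)) set" where
  "comp_edges n B \<gamma> = {(l, (\<alpha>, G, R), l') | l \<alpha> G R l'. \<alpha> \<in> \<gamma> \<and>
     (\<exists>(a :: nat \<Rightarrow> 'a) (g :: nat \<Rightarrow> 'x cc) (r :: nat \<Rightarrow> 'x set).
        (let I = {i\<in>{1..n}. \<alpha> \<inter> acts (B i) \<noteq> {}} in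
          (\<forall>i\<in>I. (l i, (a i, g i, r i), l' i) \<in> edges (B i) \<and> a i \<in> \<alpha>) \<and>
          (\<forall>i. i \<notin> I \<longrightarrow> l' i = l i) \<and>
          G = (\<Union>i\<in>I. g i) \<and>
          R = (\<Union>i\<in>I. r i)))}"

definition par_comp :: "nat \<Rightarrow> (nat \<Rightarrow> ('l, 'a, 'x) comp) \<Rightarrow> 'a set set \<Rightarrow>
    (nat \<Rightarrow> 'l, 'a set, 'x) comp" where
  "par_comp n B \<gamma> = \<lparr> locs = (\<Pi>\<^sub>E i\<in>{1..n}. locs (B i)), acts = \<gamma>,
     clks = (\<Union>i\<in>{1..n}. clks (B i)),
     edges = comp_edges n B \<gamma>,
     tpc = (\<lambda>l. \<Union>i\<in>{1..n}. tpc (B i) (l i)),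
     init_loc = (\<lambda>i\<in>{1..n}. init_loc (B i)),
     init_cc = (\<Union>i\<in>{1..n}. init_cc (B i)) \<rparr>"

definition ominus :: "'a set set \<Rightarrow> 'a set \<Rightarrow> 'a set set" (infixl "\<ominus>" 65) where
  "\<gamma> \<ominus> \<alpha> = {\<beta> - \<alpha> | \<beta>. \<beta> \<in> \<gamma> \<and> \<not> \<beta> \<subseteq> \<alpha>}"

lemma card_ominus_less:
  assumes "finite \<gamma>" "\<alpha> \<in> \<gamma>"
  shows "card (\<gamma> \<ominus> \<alpha>) < card \<gamma>"
proof -
  have eq: "\<gamma> \<ominus> \<alpha> = (\<lambda>\<beta>. \<beta> - \<alpha>) ` {\<beta>\<in>\<gamma>. \<not> \<beta> \<subseteq> \<alpha>}"
    unfolding ominus_def by auto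
  have "card (\<gamma> \<ominus> \<alpha>) \<le> card {\<beta>\<in>\<gamma>. \<not> \<beta> \<subseteq> \<alpha>}"
    unfolding eq using assms by (intro card_image_le) auto
  also have "\<dots> < card \<gamma>"
    using assms by (intro psubset_card_mono) auto
  finally show ?thesis .
qed

lemma finite_ominus: "finite \<gamma> \<Longrightarrow> finite (\<gamma> \<ominus> \<alpha>)"
proof -
  assume "finite \<gamma>"
  moreover have "\<gamma> \<ominus> \<alpha> = (\<lambda>\<beta>. \<beta> - \<alpha>) ` {\<beta>\<in>\<gamma>. \<not> \<beta> \<subseteq> \<alpha>}"
    unfolding ominus_def by auto
  ultimately show ?thesis by simp
qed

text \<open>E(gamma), evaluated on the values h a of the history clocks. (For infinite
  gamma, which never arises for finite components, the value is fixed to True.)\<close>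
function Eint :: "'a set set \<Rightarrow> ('a \<Rightarrow> real) \<Rightarrow> bool" where
  "Eint \<gamma> h = (if \<gamma> = {} \<or> infinite \<gamma> then True else
     (\<exists>\<alpha>\<in>\<gamma>. (\<forall>ai\<in>\<alpha>. \<forall>aj\<in>\<alpha>. h ai = h aj) \<and>
             (\<forall>ai\<in>\<alpha>. \<forall>ak\<in>Act (\<gamma> \<ominus> \<alpha>). h ai \<le> h ak) \<and>
             Eint (\<gamma> \<ominus> \<alpha>) h))"
  by pat_completeness auto
termination
  by (relation "measure (\<lambda>(\<gamma>, h). card \<gamma>)") (auto intro: card_ominus_less)

declare Eint.simps [simp del]

end

theory Submission imports Defs begin

text \<open>Time transitions add the same delay to all history clocks, and the order
  pattern demanded by \<open>\<E>(\<gamma>)\<close>, made of equalities and non-strict inequalities, is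
  invariant under any monotone map of the clock values. Executing an interaction
  \<open>\<alpha>\<close> resets exactly the history clocks of the actions of \<open>\<alpha>\<close>; they then hold the
  least value 0 among nonnegative clocks, so \<open>\<alpha>\<close> can be chosen first in the
  disjunction defining \<open>\<E>(\<gamma>)\<close>, and the remaining conjunct \<open>\<E>(\<gamma> \<ominus> \<alpha>)\<close> follows
  from \<open>\<E>(\<gamma>)\<close> and ignores the clocks of \<open>\<alpha>\<close>.\<close>

lemma Act_ominus: "Act (\<gamma> \<ominus> \<alpha>) = Act \<gamma> - \<alpha>"
  unfolding Act_def ominus_def by blast

lemma ominus_ominus: "\<gamma> \<ominus> \<alpha> \<ominus> \<beta> = \<gamma> \<ominus> (\<alpha> \<union> \<beta>)"
  unfolding ominus_def by (auto simp: Diff_Un)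

lemma Eint_trivial: "\<gamma> = {} \<or> infinite \<gamma> \<Longrightarrow> Eint \<gamma> h"
  by (simp add: Eint.simps)

lemma Eint_unfold:
  assumes "finite \<gamma>" "\<gamma> \<noteq> {}"
  shows "Eint \<gamma> h \<longleftrightarrow> (\<exists>\<alpha>\<in>\<gamma>. (\<forall>ai\<in>\<alpha>. \<forall>aj\<in>\<alpha>. h ai = h aj) \<and>
           (\<forall>ai\<in>\<alpha>. \<forall>ak\<in>Act (\<gamma> \<ominus> \<alpha>). h ai \<le> h ak) \<and> Eint (\<gamma> \<ominus> \<alpha>) h)"
  using assms by (simp add: Eint.simps[of \<gamma>])

lemma Eint_ominus: "finite \<gamma> \<Longrightarrow> Eint \<gamma> h \<Longrightarrow> Eint (\<gamma> \<ominus> \<beta>) h"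
proof (induction \<gamma> h arbitrary: \<beta> rule: Eint.induct)
  case (1 \<gamma> h)
  show ?case
  proof (cases "\<gamma> = {}")
    case True
    then show ?thesis by (simp add: ominus_def Eint_trivial)
  next
    case False
    from "1.prems"(2) obtain \<alpha> where \<alpha>: "\<alpha> \<in> \<gamma>" and eq: "\<forall>ai\<in>\<alpha>. \<forall>aj\<in>\<alpha>. h ai = h aj"
      and le: "\<forall>ai\<in>\<alpha>. \<forall>ak\<in>Act (\<gamma> \<ominus> \<alpha>). h ai \<le> h ak" and rest: "Eint (\<gamma> \<ominus> \<alpha>) h"
      unfolding Eint_unfold[OF "1.prems"(1) False] by blast
    have IH: "Eint (\<gamma> \<ominus> \<alpha> \<ominus> \<beta>) h"
      using "1.IH" False "1.prems"(1) \<alpha> rest by (simp add: finite_ominus)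
    show ?thesis
    proof (cases "\<alpha> \<subseteq> \<beta>")
      case True
      then show ?thesis using IH by (simp add: ominus_ominus Un_absorb1)
    next
      case False
      have \<alpha>\<beta>: "\<alpha> - \<beta> \<in> \<gamma> \<ominus> \<beta>" using \<alpha> False unfolding ominus_def by blast
      have rem: "\<gamma> \<ominus> \<beta> \<ominus> (\<alpha> - \<beta>) = \<gamma> \<ominus> \<alpha> \<ominus> \<beta>"
        by (simp add: ominus_ominus Un_commute)
      have "\<forall>ai\<in>\<alpha> - \<beta>. \<forall>aj\<in>\<alpha> - \<beta>. h ai = h aj"
        using eq by blast
      moreover have "\<forall>ai\<in>\<alpha> - \<beta>. \<forall>ak\<in>Act (\<gamma> \<ominus> \<beta> \<ominus> (\<alpha> - \<beta>)). h ai \<le> h ak"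
        using le unfolding rem Act_ominus by blast
      moreover have "Eint (\<gamma> \<ominus> \<beta> \<ominus> (\<alpha> - \<beta>)) h"
        using IH rem by simp
      moreover have "\<gamma> \<ominus> \<beta> \<noteq> {}" using \<alpha>\<beta> by blast
      ultimately show ?thesis
        using \<alpha>\<beta> Eint_unfold[OF finite_ominus[OF "1.prems"(1)]] by blast
    qed
  qed
qed

lemma Eint_cong: "\<forall>b\<in>Act \<gamma>. h b = h' b \<Longrightarrow> Eint \<gamma> h = Eint \<gamma> h'"
proof (induction \<gamma> h rule: Eint.induct)
  case (1 \<gamma> h)
  show ?case
  proof (cases "\<gamma> = {} \<or> infinite \<gamma>")
    case True
    then show ?thesis by (simp add: Eint_trivial)
  next
    case False
    then have fin: "finite \<gamma>" "\<gamma> \<noteq> {}" by auto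
    have "Eint (\<gamma> \<ominus> \<alpha>) h = Eint (\<gamma> \<ominus> \<alpha>) h'" if "\<alpha> \<in> \<gamma>" for \<alpha>
      using "1.IH"[OF False that] "1.prems" by (simp add: Act_ominus)
    moreover have "\<forall>b\<in>\<alpha> \<union> Act (\<gamma> \<ominus> \<alpha>). h b = h' b" if "\<alpha> \<in> \<gamma>" for \<alpha>
    proof -
      have "\<alpha> \<union> Act (\<gamma> \<ominus> \<alpha>) \<subseteq> Act \<gamma>"
        using that unfolding Act_ominus by (auto simp: Act_def)
      with "1.prems" show ?thesis by blast
    qed
    ultimately show ?thesis
      unfolding Eint_unfold[OF fin] by (intro bex_cong refl) simp
  qed
qed

lemma Eint_mono_map:
  assumes "mono f"
  shows "Eint \<gamma> h \<Longrightarrow> Eint \<gamma> (f \<circ> h)"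
proof (induction \<gamma> h rule: Eint.induct)
  case (1 \<gamma> h)
  show ?case
  proof (cases "\<gamma> = {} \<or> infinite \<gamma>")
    case True
    then show ?thesis by (simp add: Eint_trivial)
  next
    case False
    then have fin: "finite \<gamma>" "\<gamma> \<noteq> {}" by auto
    from "1.prems" obtain \<alpha> where \<alpha>: "\<alpha> \<in> \<gamma>" and eq: "\<forall>ai\<in>\<alpha>. \<forall>aj\<in>\<alpha>. h ai = h aj"
      and le: "\<forall>ai\<in>\<alpha>. \<forall>ak\<in>Act (\<gamma> \<ominus> \<alpha>). h ai \<le> h ak" and rest: "Eint (\<gamma> \<ominus> \<alpha>) h"
      unfolding Eint_unfold[OF fin] by blast
    have "\<forall>ai\<in>\<alpha>. \<forall>aj\<in>\<alpha>. (f \<circ> h) ai = (f \<circ> h) aj"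
      using eq by (metis comp_apply)
    moreover have "\<forall>ai\<in>\<alpha>. \<forall>ak\<in>Act (\<gamma> \<ominus> \<alpha>). (f \<circ> h) ai \<le> (f \<circ> h) ak"
      using le monoD[OF assms] by (metis comp_apply)
    moreover have "Eint (\<gamma> \<ominus> \<alpha>) (f \<circ> h)"
      using "1.IH"[OF False \<alpha> rest] .
    ultimately show ?thesis
      using \<alpha> unfolding Eint_unfold[OF fin] by blast
  qed
qed

lemma Eint_reset:
  assumes "finite \<gamma>" "Eint \<gamma> h" "\<alpha> \<in> \<gamma>" "\<forall>b\<in>Act \<gamma>. 0 \<le> h b"
  shows "Eint \<gamma> (\<lambda>b. if b \<in> \<alpha> then 0 else h b)"
proof -
  let ?h = "\<lambda>b. if b \<in> \<alpha> then 0 else h b"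
  have "\<forall>ai\<in>\<alpha>. \<forall>aj\<in>\<alpha>. ?h ai = ?h aj"
    by simp
  moreover have "\<forall>ai\<in>\<alpha>. \<forall>ak\<in>Act (\<gamma> \<ominus> \<alpha>). ?h ai \<le> ?h ak"
    using assms(4) by (simp add: Act_ominus)
  moreover have "Eint (\<gamma> \<ominus> \<alpha>) ?h"
    using Eint_ominus[OF assms(1,2)] Eint_cong[of "\<gamma> \<ominus> \<alpha>" ?h h]
    by (simp add: Act_ominus)
  moreover have "\<gamma> \<noteq> {}"
    using assms(3) by blast
  ultimately show ?thesis
    using assms(3) unfolding Eint_unfold[OF assms(1) \<open>\<gamma> \<noteq> {}\<close>] by blast
qed

lemma acts_hist [simp]: "acts (hist B) = acts B"
  by (simp add: hist_def)

lemma clks_hist [simp]: "clks (hist B) = Orig ` clks B \<union> {H0} \<union> H ` acts B"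
  by (simp add: hist_def)

lemma edge_hist_resets:
  assumes "wf_comp B" "(l, (a, g, r), l') \<in> edges (hist B)"
  shows "a \<in> acts B" and "H b \<in> r \<longleftrightarrow> b = a"
proof -
  from assms(2) obtain g0 r0 where "(l, (a, g0, r0), l') \<in> edges B" "r = Orig ` r0 \<union> {H a}"
    unfolding hist_def by auto
  then show "a \<in> acts B" and "H b \<in> r \<longleftrightarrow> b = a"
    using assms(1) unfolding wf_comp_def by auto
qed

text \<open>Each participant of \<open>\<alpha>\<close> contributes its history clock for the unique action
  it shares with \<open>\<alpha>\<close>.\<close>
lemma comp_edge_hist_resets:
  assumes wf: "\<forall>i\<in>{1..n}. wf_comp (B i)"
    and interactions: "\<forall>\<alpha>\<in>\<gamma>. is_interaction n B \<alpha>"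
    and edge: "(l, (\<alpha>, G, R), l') \<in> comp_edges n (\<lambda>i. hist (B i)) \<gamma>"
  shows "\<alpha> \<in> \<gamma>" and "H b \<in> R \<longleftrightarrow> b \<in> \<alpha>"
proof -
  define I where "I = {i\<in>{1..n}. \<alpha> \<inter> acts (B i) \<noteq> {}}"
  from edge obtain a g r where \<alpha>: "\<alpha> \<in> \<gamma>"
    and edges: "\<forall>i\<in>I. (l i, (a i, g i, r i), l' i) \<in> edges (hist (B i)) \<and> a i \<in> \<alpha>"
    and R: "R = (\<Union>i\<in>I. r i)"
    unfolding comp_edges_def I_def Let_def by auto
  have r: "H b \<in> r i \<longleftrightarrow> b = a i" and a: "a i \<in> \<alpha> \<inter> acts (B i)" if "i \<in> I" for i
    using edge_hist_resets[of "B i"] edges wf that unfolding I_def by blast+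
  show "\<alpha> \<in> \<gamma>" by (fact \<alpha>)
  show "H b \<in> R \<longleftrightarrow> b \<in> \<alpha>"
  proof
    assume "H b \<in> R"
    then show "b \<in> \<alpha>" using R r a by blast
  next
    assume b: "b \<in> \<alpha>"
    then obtain j where j: "j \<in> {1..n}" "b \<in> acts (B j)"
      using interactions \<alpha> unfolding is_interaction_def by blast
    then have "j \<in> I" using b unfolding I_def by blast
    have "finite (\<alpha> \<inter> acts (B j))" "card (\<alpha> \<inter> acts (B j)) \<le> Suc 0"
      using wf interactions \<alpha> j(1) unfolding wf_comp_def is_interaction_def by auto
    then have "b = a j" using a[OF \<open>j \<in> I\<close>] b j(2) card_le_Suc0_iff_eq by blast
    then show "H b \<in> R" using R r \<open>j \<in> I\<close> by blast
  qed
qed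

lemma finite_interactions:
  assumes "\<forall>i\<in>{1..n}. wf_comp (B i)" "\<forall>\<alpha>\<in>\<gamma>. is_interaction n B \<alpha>"
  shows "finite \<gamma>"
proof (rule finite_subset)
  show "\<gamma> \<subseteq> Pow (\<Union>i\<in>{1..n}. acts (B i))"
    using assms(2) unfolding is_interaction_def by blast
  show "finite (Pow (\<Union>i\<in>{1..n}. acts (B i)))"
    using assms(1) by (simp add: wf_comp_def)
qed

lemma is_state_history_clock_nonneg:
  assumes "\<forall>\<alpha>\<in>\<gamma>. is_interaction n B \<alpha>" "is_state (par_comp n (\<lambda>i. hist (B i)) \<gamma>) s"
  shows "\<forall>b\<in>Act \<gamma>. 0 \<le> snd s (H b)"
  using assms unfolding is_interaction_def Act_def is_state_def par_comp_def by fastforce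

theorem proposition2:
  fixes n :: nat
    and B :: "nat \<Rightarrow> ('l, 'a, 'x) comp"
    and \<gamma> :: "'a set set"
  assumes wf: "\<forall>i\<in>{1..n}. wf_comp (B i)"
    and disj_acts: "\<forall>i\<in>{1..n}. \<forall>j\<in>{1..n}. i \<noteq> j \<longrightarrow> acts (B i) \<inter> acts (B j) = {}"
    and disj_clks: "\<forall>i\<in>{1..n}. \<forall>j\<in>{1..n}. i \<noteq> j \<longrightarrow> clks (B i) \<inter> clks (B j) = {}"
    and interactions: "\<forall>\<alpha>\<in>\<gamma>. is_interaction n B \<alpha>"
  shows "inductive_pred (par_comp n (\<lambda>i. hist (B i)) \<gamma>)
           (\<lambda>s. Eint \<gamma> (\<lambda>a. snd s (H a)))"
proof -
  let ?C = "par_comp n (\<lambda>i. hist (B i)) \<gamma>"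
  show ?thesis
    unfolding inductive_pred_def
  proof (intro allI impI conjI)
    fix s d s'
    assume "Eint \<gamma> (\<lambda>a. snd s (H a))" "time_step ?C s d s'"
    then show "Eint \<gamma> (\<lambda>a. snd s' (H a))"
      using Eint_mono_map[of "\<lambda>t. t + d"]
      by (auto simp: time_step_def delay_def mono_def comp_def)
  next
    fix s \<alpha> s'
    assume s: "is_state ?C s" "Eint \<gamma> (\<lambda>a. snd s (H a))" and "disc_step ?C s \<alpha> s'"
    then obtain G R l' where edge: "(fst s, (\<alpha>, G, R), l') \<in> comp_edges n (\<lambda>i. hist (B i)) \<gamma>"
      and s': "s' = (l', reset (snd s) R)"
      unfolding disc_step_def par_comp_def by auto
    note resets = comp_edge_hist_resets[OF wf interactions edge]
    have "(\<lambda>b. snd s' (H b)) = (\<lambda>b. if b \<in> \<alpha> then 0 else snd s (H b))"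
      using resets(2) by (auto simp: s' reset_def)
    then show "Eint \<gamma> (\<lambda>a. snd s' (H a))"
      using Eint_reset[OF finite_interactions[OF wf interactions] s(2) resets(1)]
        is_state_history_clock_nonneg[OF interactions s(1)] by simp
  qed
qed

end
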